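(* Let $d\ge 3$, $z\in(-1,1)$ and $\xi\in\mathbb S^{d-1}$. Then $$h_z^{-1}\bigl(\mathscr C_z^{\xi}\bigr)=\mathscr C_0^{\,g_z(\xi)}.$$
   Context: $\mathbb S^{d-1}=\{\xi\in\mathbb R^d:\|\xi\|=1\}$, and $\epsilon^1,\dots,\epsilon^d$ is the standard basis of $\mathbb R^d$. For $z\in(-1,1)$ and $\xi\in\mathbb S^{d-1}$ set $\mathscr C_z^{\xi}=\{\eta\in\mathbb S^{d-1}:\langle\eta,\xi\rangle=z\xi_d\}$. The maps $h_z,g_z:\mathbb S^{d-1}\to\mathbb S^{d-1}$ are $$h_z(\eta)=\sum_{i=1}^{d-1}\frac{\sqrt{1-z^2}}{1+z\eta_d}\,\eta_i\,\epsilon^i+\frac{z+\eta_d}{1+z\eta_d}\,\epsilon^d,$$ $$g_z(\xi)=\frac{1}{\sqrt{1-z^2\xi_d^2}}\Bigl(\sum_{i=1}^{d-1}\xi_i\,\epsilon^i+\sqrt{1-z^2}\,\xi_d\,\epsilon^d\Bigr).$$ The map $h_z$ is a bijection of $\mathbb S^{d-1}$. *)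

theory Defs
  imports Complex_Main
begin

text \<open>Vectors of R^d are represented as functions nat => real supported on the
index set {1..d}; coordinate i is x i, and epsilon^i is the i-th unit vector.\<close>

definition vecs :: "nat \<Rightarrow> (nat \<Rightarrow> real) set" where
  "vecs d = {x. \<forall>i. i \<notin> {1..d} \<longrightarrow> x i = 0}"

definition inner_d :: "nat \<Rightarrow> (nat \<Rightarrow> real) \<Rightarrow> (nat \<Rightarrow> real) \<Rightarrow> real" where
  "inner_d d x y = (\<Sum>i=1..d. x i * y i)"

definition sphere_d :: "nat \<Rightarrow> (nat \<Rightarrow> real) set" where
  "sphere_d d = {x \<in> vecs d. sqrt (inner_d d x x) = 1}"

definition capC :: "nat \<Rightarrow> real \<Rightarrow> (nat \<Rightarrow> real) \<Rightarrow> (nat \<Rightarrow> real) set" where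
  "capC d z \<xi> = {\<eta> \<in> sphere_d d. inner_d d \<eta> \<xi> = z * \<xi> d}"

definition hmap :: "nat \<Rightarrow> real \<Rightarrow> (nat \<Rightarrow> real) \<Rightarrow> (nat \<Rightarrow> real)" where
  "hmap d z \<eta> = (\<lambda>i. if 1 \<le> i \<and> i < d then sqrt (1 - z\<^sup>2) / (1 + z * \<eta> d) * \<eta> i
                      else if i = d then (z + \<eta> d) / (1 + z * \<eta> d) else 0)"

definition gmap :: "nat \<Rightarrow> real \<Rightarrow> (nat \<Rightarrow> real) \<Rightarrow> (nat \<Rightarrow> real)" where
  "gmap d z \<xi> = (\<lambda>i. (1 / sqrt (1 - z\<^sup>2 * (\<xi> d)\<^sup>2)) *
                      (if 1 \<le> i \<and> i < d then \<xi> i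
                       else if i = d then sqrt (1 - z\<^sup>2) * \<xi> d else 0))"

end

theory Submission
  imports Defs
begin

text \<open>Put \<open>s = sqrt (1 - z\<^sup>2)\<close> and \<open>D = 1 + z \<eta>\<^sub>d\<close>, which is positive for \<open>|z| < 1\<close>.
  The map \<open>h\<^sub>z\<close> preserves the sphere because \<open>(1 - z\<^sup>2)(1 - \<eta>\<^sub>d\<^sup>2) + (z + \<eta>\<^sub>d)\<^sup>2 = D\<^sup>2\<close>.
  Writing \<open>B(\<eta>, \<xi>) = tilted_inner d z \<eta> \<xi> = \<Sum>\<^sub>i\<^sub><\<^sub>d \<eta>\<^sub>i \<xi>\<^sub>i + s \<eta>\<^sub>d \<xi>\<^sub>d\<close>, one computes
  \<open>\<langle>h\<^sub>z \<eta>, \<xi>\<rangle> - z \<xi>\<^sub>d = (s / D) B(\<eta>, \<xi>)\<close> and \<open>\<langle>\<eta>, g\<^sub>z \<xi>\<rangle> = B(\<eta>, \<xi>) / sqrt (1 - z\<^sup>2 \<xi>\<^sub>d\<^sup>2)\<close>,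
  so both cap conditions say \<open>B(\<eta>, \<xi>) = 0\<close>.\<close>

definition tilted_inner :: "nat \<Rightarrow> real \<Rightarrow> (nat \<Rightarrow> real) \<Rightarrow> (nat \<Rightarrow> real) \<Rightarrow> real" where
  "tilted_inner d z \<eta> \<xi> = (\<Sum>i\<in>{1..<d}. \<eta> i * \<xi> i) + sqrt (1 - z\<^sup>2) * \<eta> d * \<xi> d"

lemma inner_d_split_last:
  assumes "d \<ge> 1"
  shows "inner_d d x y = (\<Sum>i\<in>{1..<d}. x i * y i) + x d * y d"
proof -
  have "{1..d} = insert d {1..<d}" using assms by auto
  then show ?thesis unfolding inner_d_def by (simp add: add.commute)
qed

lemma sphere_d_sum_squares:
  assumes "d \<ge> 1" "x \<in> sphere_d d"
  shows "(\<Sum>i\<in>{1..<d}. x i * x i) + x d * x d = 1"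
proof -
  have "inner_d d x x = 1" using assms(2) unfolding sphere_d_def by simp
  then show ?thesis using inner_d_split_last[OF assms(1)] by simp
qed

lemma sphere_d_last_coord_bound:
  assumes "d \<ge> 1" "x \<in> sphere_d d"
  shows "(x d)\<^sup>2 \<le> 1"
proof -
  have "(\<Sum>i\<in>{1..<d}. x i * x i) \<ge> 0" by (intro sum_nonneg) simp
  then show ?thesis using sphere_d_sum_squares[OF assms] by (simp add: power2_eq_square)
qed

lemma hmap_denominator_pos:
  assumes "d \<ge> 1" "\<bar>z\<bar> < 1" "\<eta> \<in> sphere_d d"
  shows "1 + z * \<eta> d > 0"
proof -
  have "\<bar>\<eta> d\<bar> \<le> 1"
    using sphere_d_last_coord_bound[OF assms(1,3)] by (simp add: abs_square_le_1)
  then have "\<bar>z * \<eta> d\<bar> < 1"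
    using assms(2) by (simp add: abs_mult) (smt (verit) abs_ge_zero mult_left_le)
  then show ?thesis by simp
qed

lemma gmap_normalizer_pos:
  assumes "d \<ge> 1" "\<bar>z\<bar> < 1" "\<xi> \<in> sphere_d d"
  shows "sqrt (1 - z\<^sup>2 * (\<xi> d)\<^sup>2) > 0"
proof -
  have "z\<^sup>2 * (\<xi> d)\<^sup>2 \<le> z\<^sup>2"
    using sphere_d_last_coord_bound[OF assms(1,3)] mult_left_le[of "(\<xi> d)\<^sup>2" "z\<^sup>2"] by simp
  moreover have "z\<^sup>2 < 1" using assms(2) by (simp add: abs_square_less_1)
  ultimately show ?thesis by simp
qed

lemma hmap_in_sphere_d:
  assumes "d \<ge> 1" "\<bar>z\<bar> < 1" "\<eta> \<in> sphere_d d"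
  shows "hmap d z \<eta> \<in> sphere_d d"
proof -
  define s where "s = sqrt (1 - z\<^sup>2)"
  define D where "D = 1 + z * \<eta> d"
  define Q where "Q = (\<Sum>i\<in>{1..<d}. \<eta> i * \<eta> i)"
  have D_pos: "D > 0" unfolding D_def by (rule hmap_denominator_pos[OF assms])
  have Q_eq: "Q = 1 - \<eta> d * \<eta> d" using sphere_d_sum_squares[OF assms(1,3)] unfolding Q_def by simp
  have s_sq: "s * s = 1 - z\<^sup>2"
    unfolding s_def using assms(2) by (simp add: abs_square_less_1 less_imp_le)
  have "(\<Sum>i\<in>{1..<d}. hmap d z \<eta> i * hmap d z \<eta> i) = s * s / (D * D) * Q"
    unfolding Q_def sum_distrib_left by (rule sum.cong) (auto simp: hmap_def s_def D_def)
  moreover have "hmap d z \<eta> d * hmap d z \<eta> d = (z + \<eta> d)\<^sup>2 / (D * D)"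
    using assms(1) unfolding hmap_def D_def by (simp add: power2_eq_square)
  ultimately have "inner_d d (hmap d z \<eta>) (hmap d z \<eta>) = ((1 - z\<^sup>2) * Q + (z + \<eta> d)\<^sup>2) / (D * D)"
    unfolding inner_d_split_last[OF assms(1)] s_sq by (simp add: add_divide_distrib)
  also have "(1 - z\<^sup>2) * Q + (z + \<eta> d)\<^sup>2 = D * D"
    unfolding Q_eq D_def by (simp add: algebra_simps power2_eq_square)
  finally have "inner_d d (hmap d z \<eta>) (hmap d z \<eta>) = 1" using D_pos by simp
  moreover have "hmap d z \<eta> \<in> vecs d" using assms(1) unfolding vecs_def hmap_def by auto
  ultimately show ?thesis unfolding sphere_d_def by simp
qed

lemma inner_hmap_eq:
  assumes "d \<ge> 1" "\<bar>z\<bar> < 1" "1 + z * \<eta> d \<noteq> 0"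
  shows "inner_d d (hmap d z \<eta>) \<xi>
           = z * \<xi> d + sqrt (1 - z\<^sup>2) / (1 + z * \<eta> d) * tilted_inner d z \<eta> \<xi>"
proof -
  define s where "s = sqrt (1 - z\<^sup>2)"
  define D where "D = 1 + z * \<eta> d"
  define A where "A = (\<Sum>i\<in>{1..<d}. \<eta> i * \<xi> i)"
  have s_sq: "s * s = 1 - z\<^sup>2"
    unfolding s_def using assms(2) by (simp add: abs_square_less_1 less_imp_le)
  have "(\<Sum>i\<in>{1..<d}. hmap d z \<eta> i * \<xi> i) = s / D * A"
    unfolding A_def sum_distrib_left by (rule sum.cong) (auto simp: hmap_def s_def D_def)
  moreover have "hmap d z \<eta> d * \<xi> d = z * \<xi> d + s * s * \<eta> d * \<xi> d / D"
  proof -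
    have "(z + \<eta> d) * \<xi> d = z * \<xi> d * D + s * s * \<eta> d * \<xi> d"
      unfolding s_sq D_def by (simp add: algebra_simps power2_eq_square)
    then show ?thesis
      using assms(1,3) unfolding hmap_def D_def[symmetric] by (simp add: field_simps)
  qed
  ultimately have "inner_d d (hmap d z \<eta>) \<xi> = z * \<xi> d + s / D * (A + s * \<eta> d * \<xi> d)"
    unfolding inner_d_split_last[OF assms(1)] by (simp add: algebra_simps)
  then show ?thesis unfolding s_def D_def A_def tilted_inner_def .
qed

lemma inner_gmap_eq:
  assumes "d \<ge> 1"
  shows "inner_d d \<eta> (gmap d z \<xi>) = tilted_inner d z \<eta> \<xi> / sqrt (1 - z\<^sup>2 * (\<xi> d)\<^sup>2)"
proof -
  have "(\<Sum>i\<in>{1..<d}. \<eta> i * gmap d z \<xi> i)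
          = (\<Sum>i\<in>{1..<d}. \<eta> i * \<xi> i) / sqrt (1 - z\<^sup>2 * (\<xi> d)\<^sup>2)"
    unfolding sum_divide_distrib by (rule sum.cong) (auto simp: gmap_def)
  then show ?thesis
    unfolding inner_d_split_last[OF assms] tilted_inner_def by (simp add: gmap_def add_divide_distrib)
qed

theorem mainTheorem1:
  fixes d :: nat and z :: real and \<xi> :: "nat \<Rightarrow> real"
  assumes "d \<ge> 3" and "-1 < z" and "z < 1" and "\<xi> \<in> sphere_d d"
  shows "{\<eta> \<in> sphere_d d. hmap d z \<eta> \<in> capC d z \<xi>} = capC d 0 (gmap d z \<xi>)"
proof -
  have d: "d \<ge> 1" and z: "\<bar>z\<bar> < 1" using assms(1-3) by auto
  have "hmap d z \<eta> \<in> capC d z \<xi> \<longleftrightarrow> inner_d d \<eta> (gmap d z \<xi>) = 0"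
    if \<eta>: "\<eta> \<in> sphere_d d" for \<eta>
  proof -
    have D: "1 + z * \<eta> d > 0" by (rule hmap_denominator_pos[OF d z \<eta>])
    have "sqrt (1 - z\<^sup>2) > 0" using z by (simp add: abs_square_less_1)
    then have "hmap d z \<eta> \<in> capC d z \<xi> \<longleftrightarrow> tilted_inner d z \<eta> \<xi> = 0"
      using hmap_in_sphere_d[OF d z \<eta>] inner_hmap_eq[OF d z, of \<eta> \<xi>] D
      unfolding capC_def by simp
    also have "\<dots> \<longleftrightarrow> inner_d d \<eta> (gmap d z \<xi>) = 0"
      using gmap_normalizer_pos[OF d z assms(4)] by (simp add: inner_gmap_eq[OF d])
    finally show ?thesis .
  qed
  then show ?thesis unfolding capC_def[of d 0] by auto
qed

end
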